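(* Let $k\in\mathbb{Z}_{\ge1}\cup\{\infty\}$, $U\subset\mathbb{R}^m$, $V\subset\mathbb{R}^n$ open, let $\widehat{\varphi}^\sharp:C^k(V)\to M_{r\times r}(C^k(U)[\theta^1,\dots,\theta^s]^{\mathbb{C}})$ be a $C^k$-admissible ring-homomorphism over $\mathbb{R}\hookrightarrow\mathbb{C}$, and let $\varphi^\sharp:=\dot{\widehat{\iota}}^\sharp\circ\widehat{\varphi}^\sharp:C^k(V)\to M_{r\times r}(C^k(U)^{\mathbb{C}})$, where $\dot{\widehat{\iota}}^\sharp$ sets all $\theta^\alpha$ equal to $0$ entrywise. Let $\mathrm{Im}\,\widehat{\varphi}$ (resp. $\mathrm{Im}\,\varphi$) be the $C^k$-subscheme of $V$ defined by the ideal $\mathrm{Ker}\,\widehat{\varphi}^\sharp$ (resp. $\mathrm{Ker}\,\varphi^\sharp$) of $C^k(V)$. Then, as $C^k$-subschemes of $V$, $(\mathrm{Im}\,\widehat{\varphi})_{\mathrm{red}}=(\mathrm{Im}\,\varphi)_{\mathrm{red}}$.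
   Context: $C^k(U)[\theta^1,\dots,\theta^s]=C^k(U)\otimes_{\mathbb{R}}\bigwedge^\bullet\mathbb{R}^s$ with odd anticommuting $\theta^\alpha$; $(\cdot)^{\mathbb{C}}=(\cdot)\otimes_{\mathbb{R}}\mathbb{C}$. For a $C^k$-subscheme $Z$, $Z_{\mathrm{red}}$ denotes its associated reduced subscheme obtained by modding out all nilpotent elements of $\mathcal{O}_Z$. A super-$C^k$-ring over a $C^k$-ring $R$ is a superring $\widehat{R}$ with split exact sequence of $R$-modules $0\to M\to\widehat{R}\to R\to0$ realized compatibly as a quotient of some $R[\theta^1,\dots,\theta^s]$; super-$C^k$-ring homomorphisms are compatible pairs of superring homomorphisms with underlying map a $C^k$-ring homomorphism; an ideal is super-$C^k$-normal if the super-$C^k$-ring structure descends to the quotient. $\widehat{\varphi}^\sharp$ is $C^k$-admissible if there is a ring homomorphism $\tilde{\widehat{\varphi}}^\sharp:C^k(U\times V)[\theta]\to M_{r\times r}(C^k(U)[\theta]^{\mathbb{C}})$ with $\tilde{\widehat{\varphi}}^\sharp\circ pr_V^\sharp=\widehat{\varphi}^\sharp$ and $\tilde{\widehat{\varphi}}^\sharp\circ pr_U^\sharp$ the inclusion as scalar matrices, such that $\mathrm{Ker}\,\tilde{\widehat{\varphi}}^\sharp$ is super-$C^k$-normal and both $C^k(U)[\theta]$ and $C^k(V)$ map by super-$C^k$-ring homomorphisms into $\mathrm{Im}\,\tilde{\widehat{\varphi}}^\sharp$ with its quotient super-$C^k$-ring structure. *)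

theory Defs
  imports "HOL-Analysis.Analysis" "HOL-Library.Extended_Nat" "HOL-Library.Function_Algebras"
begin

fun Ckn :: "nat \<Rightarrow> 'a::euclidean_space set \<Rightarrow> ('a \<Rightarrow> real) \<Rightarrow> bool" where
  "Ckn 0 U f = continuous_on U f"
| "Ckn (Suc j) U f = (continuous_on U f \<and>
     (\<exists>D. \<forall>i\<in>Basis. (\<forall>x\<in>U. ((\<lambda>t. f (x + t *\<^sub>R i)) has_real_derivative D i x) (at 0))
                     \<and> Ckn j U (D i)))"

definition Ck_on :: "enat \<Rightarrow> 'a::euclidean_space set \<Rightarrow> ('a \<Rightarrow> real) \<Rightarrow> bool" where
  "Ck_on k U f = (\<forall>j. enat j \<le> k \<longrightarrow> Ckn j U f)"

text \<open>The ring C^k(U); elements are represented by functions vanishing off U.\<close>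
definition Ck_fun :: "enat \<Rightarrow> 'a::euclidean_space set \<Rightarrow> ('a \<Rightarrow> real) set" where
  "Ck_fun k U = {f. Ck_on k U f \<and> (\<forall>x. x \<notin> U \<longrightarrow> f x = 0)}"

section \<open>C^k functions on R^l (arity-l operations of a C^k-ring)\<close>

definition Eucl :: "nat \<Rightarrow> (nat \<Rightarrow> real) set" where
  "Eucl l = {x. \<forall>i\<ge>l. x i = 0}"

fun Cln :: "nat \<Rightarrow> nat \<Rightarrow> ((nat \<Rightarrow> real) \<Rightarrow> real) \<Rightarrow> bool" where
  "Cln l 0 g = continuous_on (Eucl l) g"
| "Cln l (Suc j) g = (continuous_on (Eucl l) g \<and>
     (\<exists>D. \<forall>i<l. (\<forall>x\<in>Eucl l. ((\<lambda>t. g (x(i := t))) has_real_derivative D i x) (at (x i)))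
                 \<and> Cln l j (D i)))"

definition Cl :: "nat \<Rightarrow> enat \<Rightarrow> ((nat \<Rightarrow> real) \<Rightarrow> real) \<Rightarrow> bool" where
  "Cl l k g = (\<forall>j. enat j \<le> k \<longrightarrow> Cln l j g)"

definition Ck_op :: "'a set \<Rightarrow> nat \<Rightarrow> ((nat \<Rightarrow> real) \<Rightarrow> real) \<Rightarrow> (nat \<Rightarrow> 'a \<Rightarrow> real) \<Rightarrow> 'a \<Rightarrow> real" where
  "Ck_op W l g fs = (\<lambda>x. if x \<in> W then g (\<lambda>i. if i < l then fs i x else 0) else 0)"

text \<open>An ideal J of C^k(W) such that the C^k-ring structure descends to C^k(W)/J.\<close>
definition Ck_ideal :: "enat \<Rightarrow> 'a::euclidean_space set \<Rightarrow> ('a \<Rightarrow> real) set \<Rightarrow> bool" where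
  "Ck_ideal k W J = (J \<subseteq> Ck_fun k W \<and>
     (\<forall>l g fs hs. Cl l k g \<and> (\<forall>i<l. fs i \<in> Ck_fun k W \<and> hs i \<in> Ck_fun k W \<and> fs i - hs i \<in> J)
        \<longrightarrow> Ck_op W l g fs - Ck_op W l g hs \<in> J))"

text \<open>An element is given by its coefficient functions: a I is the coefficient of
  theta^I = theta^{i_1}...theta^{i_p} (i_1 < ... < i_p, I = {i_1,...,i_p}); indices are 0..s-1.\<close>

definition gsign :: "nat set \<Rightarrow> nat set \<Rightarrow> 'c::comm_ring_1" where
  "gsign I J = (- 1) ^ card {(i, j). i \<in> I \<and> j \<in> J \<and> j < i}"

definition gmul :: "(nat set \<Rightarrow> 'a \<Rightarrow> 'c::comm_ring_1) \<Rightarrow> (nat set \<Rightarrow> 'a \<Rightarrow> 'c) \<Rightarrow> nat set \<Rightarrow> 'a \<Rightarrow> 'c" where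
  "gmul a b = (\<lambda>K x. \<Sum>I\<in>Pow K. gsign I (K - I) * a I x * b (K - I) x)"

definition gone :: "'a set \<Rightarrow> nat set \<Rightarrow> 'a \<Rightarrow> 'c::comm_ring_1" where
  "gone U = (\<lambda>I x. if I = {} \<and> x \<in> U then 1 else 0)"

definition SCk :: "enat \<Rightarrow> 'a::euclidean_space set \<Rightarrow> nat \<Rightarrow> (nat set \<Rightarrow> 'a \<Rightarrow> real) set" where
  "SCk k U s = {a. (\<forall>I. a I \<in> Ck_fun k U) \<and> (\<forall>I. \<not> I \<subseteq> {..<s} \<longrightarrow> a I = (\<lambda>_. 0))}"

text \<open>(C^k(U)[theta])^C = C^k(U)[theta] tensor_R C: real and imaginary parts in C^k(U)[theta].\<close>
definition CSCk :: "enat \<Rightarrow> 'a::euclidean_space set \<Rightarrow> nat \<Rightarrow> (nat set \<Rightarrow> 'a \<Rightarrow> complex) set" where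
  "CSCk k U s = {a. (\<lambda>I x. Re (a I x)) \<in> SCk k U s \<and> (\<lambda>I x. Im (a I x)) \<in> SCk k U s}"

definition cpx :: "(nat set \<Rightarrow> 'a \<Rightarrow> real) \<Rightarrow> nat set \<Rightarrow> 'a \<Rightarrow> complex" where
  "cpx a = (\<lambda>I x. complex_of_real (a I x))"

definition gembed :: "('a \<Rightarrow> 'c::zero) \<Rightarrow> nat set \<Rightarrow> 'a \<Rightarrow> 'c" where
  "gembed f = (\<lambda>I x. if I = {} then f x else 0)"

definition gbody :: "(nat set \<Rightarrow> 'a \<Rightarrow> 'c::zero) \<Rightarrow> nat set \<Rightarrow> 'a \<Rightarrow> 'c" where
  "gbody a = gembed (a {})"

definition Mat :: "nat \<Rightarrow> 'e::zero set \<Rightarrow> (nat \<Rightarrow> nat \<Rightarrow> 'e) set" where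
  "Mat r A = {M. (\<forall>i j. i < r \<and> j < r \<longrightarrow> M i j \<in> A) \<and> (\<forall>i j. \<not> (i < r \<and> j < r) \<longrightarrow> M i j = 0)}"

definition mmul :: "nat \<Rightarrow> ('e \<Rightarrow> 'e \<Rightarrow> 'e::comm_monoid_add) \<Rightarrow> (nat \<Rightarrow> nat \<Rightarrow> 'e) \<Rightarrow> (nat \<Rightarrow> nat \<Rightarrow> 'e) \<Rightarrow> nat \<Rightarrow> nat \<Rightarrow> 'e" where
  "mmul r mul M N = (\<lambda>i j. if i < r \<and> j < r then (\<Sum>l<r. mul (M i l) (N l j)) else 0)"

definition mscalar :: "nat \<Rightarrow> 'e::zero \<Rightarrow> nat \<Rightarrow> nat \<Rightarrow> 'e" where
  "mscalar r e = (\<lambda>i j. if i < r \<and> j = i then e else 0)"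

definition mmap :: "('e \<Rightarrow> 'e) \<Rightarrow> (nat \<Rightarrow> nat \<Rightarrow> 'e) \<Rightarrow> nat \<Rightarrow> nat \<Rightarrow> 'e" where
  "mmap h M = (\<lambda>i j. h (M i j))"

abbreviation MCSCk :: "enat \<Rightarrow> 'a::euclidean_space set \<Rightarrow> nat \<Rightarrow> nat \<Rightarrow> (nat \<Rightarrow> nat \<Rightarrow> nat set \<Rightarrow> 'a \<Rightarrow> complex) set" where
  "MCSCk k U s r \<equiv> Mat r (CSCk k U s)"

definition ring_hom_RC :: "enat \<Rightarrow> 'a::euclidean_space set \<Rightarrow> 'b::euclidean_space set \<Rightarrow> nat \<Rightarrow> nat
    \<Rightarrow> (('b \<Rightarrow> real) \<Rightarrow> nat \<Rightarrow> nat \<Rightarrow> nat set \<Rightarrow> 'a \<Rightarrow> complex) \<Rightarrow> bool" where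
  "ring_hom_RC k U V s r \<phi> =
    ((\<forall>f\<in>Ck_fun k V. \<phi> f \<in> MCSCk k U s r) \<and>
     \<phi> (indicator V) = mscalar r (gone U) \<and>
     (\<forall>f\<in>Ck_fun k V. \<forall>g\<in>Ck_fun k V. \<phi> (f + g) = \<phi> f + \<phi> g) \<and>
     (\<forall>f\<in>Ck_fun k V. \<forall>g\<in>Ck_fun k V. \<phi> (f * g) = mmul r gmul (\<phi> f) (\<phi> g)) \<and>
     (\<forall>f\<in>Ck_fun k V. \<forall>c::real. \<phi> (\<lambda>x. c * f x) = (\<lambda>i j I y. complex_of_real c * \<phi> f i j I y)))"

text \<open>Pull-backs along the projections U x V -> U and U x V -> V.\<close>
definition prU :: "'a set \<Rightarrow> 'b set \<Rightarrow> (nat set \<Rightarrow> 'a \<Rightarrow> real) \<Rightarrow> nat set \<Rightarrow> 'a \<times> 'b \<Rightarrow> real" where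
  "prU U V a = (\<lambda>I p. if fst p \<in> U \<and> snd p \<in> V then a I (fst p) else 0)"

definition prV :: "'a set \<Rightarrow> 'b set \<Rightarrow> ('b \<Rightarrow> real) \<Rightarrow> nat set \<Rightarrow> 'a \<times> 'b \<Rightarrow> real" where
  "prV U V f = (\<lambda>I p. if I = {} \<and> fst p \<in> U \<and> snd p \<in> V then f (snd p) else 0)"

text \<open>An ideal K of C^k(W)[theta] is super-C^k-normal if the super-C^k-ring structure of
  C^k(W)[theta] descends to the quotient: the splitting body/soul descends (K is stable under
  setting theta to 0) and the body ideal K_0 = K intersected with C^k(W) is a C^k-ideal, so that
  C^k(W)[theta]/K is a super-C^k-ring over the C^k-ring C^k(W)/K_0.\<close>
definition body_ideal :: "enat \<Rightarrow> 'a::euclidean_space set \<Rightarrow> (nat set \<Rightarrow> 'a \<Rightarrow> real) set \<Rightarrow> ('a \<Rightarrow> real) set" where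
  "body_ideal k W K = {f \<in> Ck_fun k W. gembed f \<in> K}"

definition super_Ck_normal :: "enat \<Rightarrow> 'a::euclidean_space set \<Rightarrow> nat \<Rightarrow> (nat set \<Rightarrow> 'a \<Rightarrow> real) set \<Rightarrow> bool" where
  "super_Ck_normal k W s K =
    (K \<subseteq> SCk k W s \<and> (\<forall>a\<in>K. gbody a \<in> K) \<and> Ck_ideal k W (body_ideal k W K))"

text \<open>A map h: C^k(X) -> C^k(W) (composed with the quotient map to C^k(W)/K_0) is a C^k-ring
  homomorphism if it commutes with all C^k-operations modulo K_0.\<close>
definition Ck_hom_mod :: "enat \<Rightarrow> 'x::euclidean_space set \<Rightarrow> 'a::euclidean_space set \<Rightarrow> ('a \<Rightarrow> real) set
    \<Rightarrow> (('x \<Rightarrow> real) \<Rightarrow> 'a \<Rightarrow> real) \<Rightarrow> bool" where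
  "Ck_hom_mod k X W J h =
    (\<forall>l g fs. Cl l k g \<and> (\<forall>i<l. fs i \<in> Ck_fun k X)
       \<longrightarrow> h (Ck_op X l g fs) - Ck_op W l g (\<lambda>i. h (fs i)) \<in> J)"

definition Ck_admissible :: "enat \<Rightarrow> 'a::euclidean_space set \<Rightarrow> 'b::euclidean_space set \<Rightarrow> nat \<Rightarrow> nat
    \<Rightarrow> (('b \<Rightarrow> real) \<Rightarrow> nat \<Rightarrow> nat \<Rightarrow> nat set \<Rightarrow> 'a \<Rightarrow> complex) \<Rightarrow> bool" where
  "Ck_admissible k U V s r \<phi> =
    (\<exists>\<Phi> :: (nat set \<Rightarrow> 'a \<times> 'b \<Rightarrow> real) \<Rightarrow> nat \<Rightarrow> nat \<Rightarrow> nat set \<Rightarrow> 'a \<Rightarrow> complex.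
       let W = U \<times> V; A = SCk k W s; K = {a \<in> A. \<Phi> a = (\<lambda>_ _ _ _. 0)};
           K0 = body_ideal k W K in
       (\<forall>a\<in>A. \<Phi> a \<in> MCSCk k U s r) \<and>
       \<Phi> (gone W) = mscalar r (gone U) \<and>
       (\<forall>a\<in>A. \<forall>b\<in>A. \<Phi> (a + b) = \<Phi> a + \<Phi> b) \<and>
       (\<forall>a\<in>A. \<forall>b\<in>A. \<Phi> (gmul a b) = mmul r gmul (\<Phi> a) (\<Phi> b)) \<and>
       (\<forall>f\<in>Ck_fun k V. \<Phi> (prV U V f) = \<phi> f) \<and>
       (\<forall>a\<in>SCk k U s. \<Phi> (prU U V a) = mscalar r (cpx a)) \<and>
       super_Ck_normal k W s K \<and>
       Ck_hom_mod k U W K0 (\<lambda>f. prU U V (gembed f) {}) \<and>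
       Ck_hom_mod k V W K0 (\<lambda>f. prV U V f {}) \<and>
       (\<forall>a\<in>SCk k U s. gbody (prU U V a) - prU U V (gbody a) \<in> K))"

definition ker_hom :: "enat \<Rightarrow> 'b::euclidean_space set \<Rightarrow> (('b \<Rightarrow> real) \<Rightarrow> nat \<Rightarrow> nat \<Rightarrow> 'e::zero) \<Rightarrow> ('b \<Rightarrow> real) set" where
  "ker_hom k V \<phi> = {f \<in> Ck_fun k V. \<phi> f = (\<lambda>_ _. 0)}"

text \<open>Ideal of C^k(V) defining the reduced subscheme: nilpotents of C^k(V)/I are modded out.\<close>
definition radical :: "enat \<Rightarrow> 'b::euclidean_space set \<Rightarrow> ('b \<Rightarrow> real) set \<Rightarrow> ('b \<Rightarrow> real) set" where
  "radical k V I = {f \<in> Ck_fun k V. \<exists>n>0. (\<lambda>x. f x ^ n) \<in> I}"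

end

theory Submission imports Defs begin

text \<open>The map \<open>\<phi>\<close> keeps only the \<open>\<theta>\<close>-free part of \<open>\<phi>hat\<close>, so \<open>Ker \<phi>hat \<subseteq> Ker \<phi>\<close>.
  Conversely, if \<open>\<phi> F = 0\<close> then every entry of \<open>\<phi>hat F\<close> lies in the ideal generated by
  \<open>\<theta>\<^sup>1, \<dots>, \<theta>\<^sup>s\<close>; since \<open>\<phi>hat\<close> is multiplicative, \<open>\<phi>hat (F\<^sup>s\<^sup>+\<^sup>1)\<close> has entries in the
  \<open>(s+1)\<close>-st power of that ideal, which is zero. Hence both kernels have the same radical.\<close>

lemma Ckn_Suc_imp_Ckn: "Ckn (Suc j) U f \<Longrightarrow> Ckn j U f"
proof (induction j arbitrary: f)
  case 0 then show ?case by simp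
next
  case (Suc j)
  then obtain D where "continuous_on U f" and
    "\<forall>i\<in>Basis. (\<forall>x\<in>U. ((\<lambda>t. f (x + t *\<^sub>R i)) has_real_derivative D i x) (at 0)) \<and> Ckn (Suc j) U (D i)"
    by auto
  with Suc.IH show ?case by (auto intro!: exI[of _ D])
qed

lemma Ckn_add: "Ckn j U f \<Longrightarrow> Ckn j U g \<Longrightarrow> Ckn j U (\<lambda>x. f x + g x)"
proof (induction j arbitrary: f g)
  case 0 then show ?case by (simp add: continuous_on_add)
next
  case (Suc j)
  from Suc.prems(1) obtain Df where cf: "continuous_on U f" and
    Df: "\<forall>i\<in>Basis. (\<forall>x\<in>U. ((\<lambda>t. f (x + t *\<^sub>R i)) has_real_derivative Df i x) (at 0)) \<and> Ckn j U (Df i)"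
    by auto
  from Suc.prems(2) obtain Dg where cg: "continuous_on U g" and
    Dg: "\<forall>i\<in>Basis. (\<forall>x\<in>U. ((\<lambda>t. g (x + t *\<^sub>R i)) has_real_derivative Dg i x) (at 0)) \<and> Ckn j U (Dg i)"
    by auto
  have "\<forall>i\<in>Basis. (\<forall>x\<in>U. ((\<lambda>t. f (x + t *\<^sub>R i) + g (x + t *\<^sub>R i))
            has_real_derivative Df i x + Dg i x) (at 0)) \<and> Ckn j U (\<lambda>x. Df i x + Dg i x)"
    using Df Dg Suc.IH by (auto intro: DERIV_add)
  then show ?case by (auto intro!: continuous_on_add cf cg exI[of _ "\<lambda>i x. Df i x + Dg i x"])
qed

lemma Ckn_mult: "Ckn j U f \<Longrightarrow> Ckn j U g \<Longrightarrow> Ckn j U (\<lambda>x. f x * g x)"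
proof (induction j arbitrary: f g)
  case 0 then show ?case by (simp add: continuous_on_mult)
next
  case (Suc j)
  from Suc.prems(1) obtain Df where cf: "continuous_on U f" and
    Df: "\<forall>i\<in>Basis. (\<forall>x\<in>U. ((\<lambda>t. f (x + t *\<^sub>R i)) has_real_derivative Df i x) (at 0)) \<and> Ckn j U (Df i)"
    by auto
  from Suc.prems(2) obtain Dg where cg: "continuous_on U g" and
    Dg: "\<forall>i\<in>Basis. (\<forall>x\<in>U. ((\<lambda>t. g (x + t *\<^sub>R i)) has_real_derivative Dg i x) (at 0)) \<and> Ckn j U (Dg i)"
    by auto
  have fj: "Ckn j U f" and gj: "Ckn j U g"
    using Suc.prems Ckn_Suc_imp_Ckn by blast+
  define D where "D = (\<lambda>i x. Df i x * g x + Dg i x * f x)"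
  have "((\<lambda>t. f (x + t *\<^sub>R i) * g (x + t *\<^sub>R i)) has_real_derivative D i x) (at 0)"
    if "i \<in> Basis" "x \<in> U" for i x
    using DERIV_mult[of "\<lambda>t. f (x + t *\<^sub>R i)" "Df i x" 0 UNIV "\<lambda>t. g (x + t *\<^sub>R i)" "Dg i x"] Df Dg that
    by (simp add: D_def)
  moreover have "Ckn j U (D i)" if "i \<in> Basis" for i
    using Df Dg that fj gj unfolding D_def by (auto intro!: Ckn_add Suc.IH)
  ultimately show ?case by (auto intro!: continuous_on_mult cf cg exI[of _ D])
qed

lemma Ck_fun_mult: "f \<in> Ck_fun k U \<Longrightarrow> g \<in> Ck_fun k U \<Longrightarrow> f * g \<in> Ck_fun k U"
  unfolding Ck_fun_def Ck_on_def times_fun_def by (auto intro: Ckn_mult)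

text \<open>\<open>theta_order_ge p a\<close>: the Grassmann element \<open>a\<close> lies in the \<open>p\<close>-th power of the ideal
  generated by the odd generators, i.e. its coefficients of \<open>\<theta>\<close>-degree \<open>< p\<close> vanish.\<close>
definition theta_order_ge :: "nat \<Rightarrow> (nat set \<Rightarrow> 'a \<Rightarrow> 'c::zero) \<Rightarrow> bool" where
  "theta_order_ge p a = (\<forall>I x. finite I \<and> card I < p \<longrightarrow> a I x = 0)"

lemma theta_order_ge_gmul:
  assumes "theta_order_ge p a" "theta_order_ge q b"
  shows "theta_order_ge (p + q) (gmul a b)"
  unfolding theta_order_ge_def
proof (intro allI impI)
  fix K :: "nat set" and x assume K: "finite K \<and> card K < p + q"
  have "gsign I (K - I) * a I x * b (K - I) x = 0" if "I \<in> Pow K" for I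
  proof -
    have "finite I" "I \<subseteq> K" using that K finite_subset by auto
    then have "card I + card (K - I) = card K"
      using K by (metis card_Diff_subset card_mono le_add_diff_inverse)
    then have "card I < p \<or> card (K - I) < q" using K by linarith
    then show ?thesis using assms \<open>finite I\<close> K unfolding theta_order_ge_def by auto
  qed
  then show "gmul a b K x = 0" unfolding gmul_def by (intro sum.neutral) blast
qed

lemma sum_apply2: "(\<Sum>l\<in>A. F l) I x = (\<Sum>l\<in>A. F l I x)"
  by (induction A rule: infinite_finite_induct) auto

lemma theta_order_ge_mmul:
  assumes "\<forall>i j. theta_order_ge p (M i j)" "\<forall>i j. theta_order_ge q (N i j)"
  shows "theta_order_ge (p + q) (mmul r gmul M N i j)"
  using theta_order_ge_gmul[OF assms(1)[rule_format] assms(2)[rule_format]]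
  unfolding mmul_def theta_order_ge_def by (auto simp: sum_apply2)

text \<open>A monomial in \<open>s\<close> odd generators has degree at most \<open>s\<close>.\<close>
lemma CSCk_theta_order_ge_eq_0:
  assumes "a \<in> CSCk k U s" "theta_order_ge (Suc s) a"
  shows "a = 0"
proof (intro ext)
  fix I x
  show "a I x = 0 I x"
  proof (cases "I \<subseteq> {..<s}")
    case True
    then have "finite I" "card I < Suc s"
      using finite_subset card_mono[of "{..<s}" I] by fastforce+
    then show ?thesis using assms(2) unfolding theta_order_ge_def by simp
  next
    case False
    then have "Re (a I x) = 0" "Im (a I x) = 0"
      using assms(1) unfolding CSCk_def SCk_def by (auto dest!: fun_cong)
    then show ?thesis by (simp add: complex_eq_iff)
  qed
qed

lemma ker_hom_subset_ker_hom_gbody: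
  "ker_hom k V \<phi>hat \<subseteq> ker_hom k V (\<lambda>f. mmap gbody (\<phi>hat f))"
  unfolding ker_hom_def mmap_def gbody_def gembed_def by (auto simp: fun_eq_iff)

lemma radical_mono: "I \<subseteq> J \<Longrightarrow> radical k V I \<subseteq> radical k V J"
  unfolding radical_def by blast

lemma ker_hom_gbody_theta_order_ge_1:
  assumes "F \<in> ker_hom k V (\<lambda>f. mmap gbody (\<phi>hat f))"
  shows "theta_order_ge 1 (\<phi>hat F i j)"
proof -
  have "gbody (\<phi>hat F i j) {} x = 0" for x
    using assms unfolding ker_hom_def mmap_def by (simp add: fun_eq_iff)
  then show ?thesis unfolding gbody_def gembed_def theta_order_ge_def by auto
qed

lemma theta_order_ge_power:
  assumes hom: "ring_hom_RC k U V s r \<phi>hat"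
    and F: "F \<in> ker_hom k V (\<lambda>f. mmap gbody (\<phi>hat f))"
  shows "(\<lambda>x. F x ^ Suc m) \<in> Ck_fun k V \<and> (\<forall>i j. theta_order_ge (Suc m) (\<phi>hat (\<lambda>x. F x ^ Suc m) i j))"
proof (induction m)
  case 0
  with F ker_hom_gbody_theta_order_ge_1[OF F] show ?case unfolding ker_hom_def by simp
next
  case (Suc m)
  have F_Ck: "F \<in> Ck_fun k V" using F unfolding ker_hom_def by simp
  have eq: "(\<lambda>x. F x ^ Suc (Suc m)) = F * (\<lambda>x. F x ^ Suc m)"
    by (simp add: fun_eq_iff)
  have "\<phi>hat (F * (\<lambda>x. F x ^ Suc m)) = mmul r gmul (\<phi>hat F) (\<phi>hat (\<lambda>x. F x ^ Suc m))"
    using hom F_Ck Suc.IH unfolding ring_hom_RC_def by blast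
  moreover have "theta_order_ge (1 + Suc m) (mmul r gmul (\<phi>hat F) (\<phi>hat (\<lambda>x. F x ^ Suc m)) i j)"
    for i j
    using theta_order_ge_mmul ker_hom_gbody_theta_order_ge_1[OF F] Suc.IH by blast
  ultimately show ?case unfolding eq using Ck_fun_mult[OF F_Ck] Suc.IH by simp
qed

lemma power_in_ker_hom_of_in_ker_hom_gbody:
  assumes hom: "ring_hom_RC k U V s r \<phi>hat"
    and F: "F \<in> ker_hom k V (\<lambda>f. mmap gbody (\<phi>hat f))"
  shows "(\<lambda>x. F x ^ Suc s) \<in> ker_hom k V \<phi>hat"
proof -
  have Fs: "(\<lambda>x. F x ^ Suc s) \<in> Ck_fun k V"
    and theta: "\<And>i j. theta_order_ge (Suc s) (\<phi>hat (\<lambda>x. F x ^ Suc s) i j)"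
    using theta_order_ge_power[OF hom F] by auto
  have "\<phi>hat (\<lambda>x. F x ^ Suc s) \<in> Mat r (CSCk k U s)"
    using hom Fs unfolding ring_hom_RC_def by blast
  then have "\<phi>hat (\<lambda>x. F x ^ Suc s) i j = 0" for i j
    using CSCk_theta_order_ge_eq_0[OF _ theta[of i j]] unfolding Mat_def
    by (cases "i < r \<and> j < r") auto
  with Fs show ?thesis unfolding ker_hom_def by (auto simp: fun_eq_iff)
qed

theorem lemma4p1p12:
  fixes k :: enat and U :: "'m::euclidean_space set" and V :: "'n::euclidean_space set"
    and s r :: nat
    and \<phi>hat :: "('n \<Rightarrow> real) \<Rightarrow> nat \<Rightarrow> nat \<Rightarrow> nat set \<Rightarrow> 'm \<Rightarrow> complex"
  assumes "k \<ge> 1" and "open U" and "open V"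
    and "ring_hom_RC k U V s r \<phi>hat"
    and "Ck_admissible k U V s r \<phi>hat"
  defines "\<phi> \<equiv> (\<lambda>f. mmap gbody (\<phi>hat f))"
  shows "radical k V (ker_hom k V \<phi>hat) = radical k V (ker_hom k V \<phi>)"
proof
  show "radical k V (ker_hom k V \<phi>hat) \<subseteq> radical k V (ker_hom k V \<phi>)"
    unfolding \<phi>_def by (intro radical_mono ker_hom_subset_ker_hom_gbody)
  show "radical k V (ker_hom k V \<phi>) \<subseteq> radical k V (ker_hom k V \<phi>hat)"
  proof
    fix f assume "f \<in> radical k V (ker_hom k V \<phi>)"
    then obtain n where f: "f \<in> Ck_fun k V" and "n > 0" and fn: "(\<lambda>x. f x ^ n) \<in> ker_hom k V \<phi>"
      unfolding radical_def by auto
    have "(\<lambda>x. (f x ^ n) ^ Suc s) \<in> ker_hom k V \<phi>hat"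
      using power_in_ker_hom_of_in_ker_hom_gbody[OF assms(4)] fn unfolding \<phi>_def by blast
    moreover have "n * Suc s > 0" using \<open>n > 0\<close> by simp
    ultimately show "f \<in> radical k V (ker_hom k V \<phi>hat)"
      unfolding radical_def using f by (auto simp only: power_mult[symmetric] intro!: exI[of _ "n * Suc s"])
  qed
qed

end
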